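(* For all positive integers $t,n_s,n_b,K,|\Pi|$, all $\epsilon\in(0,1]$, $\delta\in(0,1)$, $\alpha>0$ and $\Delta\ge 0$, $$\min_{\lambda\in\{0,1\}}G_t(\lambda,\alpha,\Delta)\ \le\ \sqrt{2}\,\min_{\lambda\in[0,1]}G_t(\lambda,\alpha,\Delta).$$
   Context: Here $K$ is the number of actions, $|\Pi|$ the size of a finite policy class, $n_s$ the number of warm-start examples, $n_b$ the number of interaction rounds, $\epsilon$ an exploration parameter and $\delta$ a confidence parameter. Writing $L=\ln\frac{8n_b|\Pi|}{\delta}$, define for $\lambda\in[0,1]$ $$V_t(\lambda)=2\sqrt{\Big(\lambda^2\frac{Kt}{\epsilon}+(1-\lambda)^2n_s\Big)L}+\Big(\frac{\lambda K}{\epsilon}+(1-\lambda)\Big)L,$$ $$G_t(\lambda,\alpha,\Delta)=\frac{(1-\lambda)n_s\Delta+2V_t(\lambda)}{\lambda t+(1-\lambda)n_s\alpha}.$$ *)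

theory Defs
  imports Complex_Main
begin

text \<open>L = ln (8 n_b |Pi| / delta); Pi is the size of the finite policy class.\<close>
definition Lconst :: "nat \<Rightarrow> nat \<Rightarrow> real \<Rightarrow> real" where
  "Lconst nb Pi \<delta> = ln (8 * real nb * real Pi / \<delta>)"

definition Vt :: "nat \<Rightarrow> nat \<Rightarrow> nat \<Rightarrow> nat \<Rightarrow> nat \<Rightarrow> real \<Rightarrow> real \<Rightarrow> real \<Rightarrow> real" where
  "Vt K Pi ns nb t \<epsilon> \<delta> lam = (let L = Lconst nb Pi \<delta> in
     2 * sqrt ((lam\<^sup>2 * real K * real t / \<epsilon> + (1 - lam)\<^sup>2 * real ns) * L)
     + (lam * real K / \<epsilon> + (1 - lam)) * L)"

definition Gt :: "nat \<Rightarrow> nat \<Rightarrow> nat \<Rightarrow> nat \<Rightarrow> nat \<Rightarrow> real \<Rightarrow> real \<Rightarrow> real \<Rightarrow> real \<Rightarrow> real \<Rightarrow> real" where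
  "Gt K Pi ns nb t \<epsilon> \<delta> lam \<alpha> \<Delta> =
     ((1 - lam) * real ns * \<Delta> + 2 * Vt K Pi ns nb t \<epsilon> \<delta> lam)
     / (lam * real t + (1 - lam) * real ns * \<alpha>)"

end

theory Submission
  imports Defs
begin

text \<open>
  The denominator of \<open>G\<^sub>t(\<lambda>)\<close> is affine in \<open>\<lambda>\<close>, while the numerator is at least
  \<open>1/\<surd>2\<close> times the affine interpolation of its endpoint values: the only non-affine
  part is \<open>\<surd>(\<lambda>\<^sup>2 X + (1-\<lambda>)\<^sup>2 Y)\<close> with \<open>X = KtL/\<epsilon>\<close>, \<open>Y = n\<^sub>s L\<close>, and
  \<open>u + v \<le> \<surd>2 \<surd>(u\<^sup>2 + v\<^sup>2)\<close> bounds \<open>\<lambda>\<surd>X + (1-\<lambda>)\<surd>Y\<close> by \<open>\<surd>2\<close> times it.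
  A ratio of convex combinations is at least the smaller of the endpoint ratios
  (mediant inequality), so \<open>min(G\<^sub>t(0), G\<^sub>t(1)) \<le> \<surd>2 G\<^sub>t(\<lambda>)\<close> for every \<open>\<lambda> \<in> [0,1]\<close>.
\<close>

lemma add_le_sqrt2_sqrt_sum_squares:
  fixes u v :: real
  shows "u + v \<le> sqrt 2 * sqrt (u\<^sup>2 + v\<^sup>2)"
proof -
  have "(u + v)\<^sup>2 \<le> 2 * (u\<^sup>2 + v\<^sup>2)"
    using zero_le_power2 [of "u - v"] by (simp add: power2_eq_square algebra_simps)
  then have "u + v \<le> sqrt (2 * (u\<^sup>2 + v\<^sup>2))"
    by (rule real_le_rsqrt)
  then show ?thesis
    by (simp only: real_sqrt_mult)
qed

lemma le_sqrt2_mult: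
  fixes x :: real
  assumes "0 \<le> x"
  shows "x \<le> sqrt 2 * x"
  using assms by (simp add: mult_le_cancel_right1)

lemma min_divide_le_convex_combination:
  fixes a b x0 x1 y0 y1 :: real
  assumes "0 \<le> a" "0 \<le> b" "0 < a + b" "0 < y0" "0 < y1"
  shows "min (x0 / y0) (x1 / y1) \<le> (a * x0 + b * x1) / (a * y0 + b * y1)"
proof -
  define m where "m = min (x0 / y0) (x1 / y1)"
  have "m * y0 \<le> x0" "m * y1 \<le> x1"
    using assms by (simp_all add: m_def pos_le_divide_eq [symmetric])
  then have "a * (m * y0) + b * (m * y1) \<le> a * x0 + b * x1"
    using assms(1,2) by (intro add_mono mult_left_mono)
  then have "m * (a * y0 + b * y1) \<le> a * x0 + b * x1"
    by (simp add: algebra_simps)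
  moreover have "0 < a * y0 + b * y1"
    using assms by (smt (verit) mult_nonneg_nonneg mult_pos_pos)
  ultimately show ?thesis
    by (simp add: m_def pos_le_divide_eq)
qed

lemma Lconst_nonneg:
  assumes "0 < nb" "0 < Pi" "0 < \<delta>" "\<delta> \<le> 1"
  shows "0 \<le> Lconst nb Pi \<delta>"
proof -
  have "1 \<le> nb * Pi"
    using assms by simp
  then have "1 \<le> real nb * real Pi"
    by (metis of_nat_1 of_nat_le_iff of_nat_mult)
  then have "\<delta> \<le> 8 * real nb * real Pi"
    using assms(4) by simp
  then show ?thesis
    using assms by (simp add: Lconst_def)
qed

lemma Vt_convex_combination_le:
  assumes "0 \<le> lam" "lam \<le> 1" "0 < \<epsilon>" "0 \<le> Lconst nb Pi \<delta>"
  shows "(1 - lam) * Vt K Pi ns nb t \<epsilon> \<delta> 0 + lam * Vt K Pi ns nb t \<epsilon> \<delta> 1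
         \<le> sqrt 2 * Vt K Pi ns nb t \<epsilon> \<delta> lam"
proof -
  define L where "L = Lconst nb Pi \<delta>"
  define X where "X = real K * real t / \<epsilon> * L"
  define Y where "Y = real ns * L"
  define lin where "lin = (lam * real K / \<epsilon> + (1 - lam)) * L"
  have "0 \<le> X" "0 \<le> Y" "0 \<le> lin"
    using assms by (simp_all add: X_def Y_def lin_def L_def)
  have "(lam\<^sup>2 * real K * real t / \<epsilon> + (1 - lam)\<^sup>2 * real ns) * L = lam\<^sup>2 * X + (1 - lam)\<^sup>2 * Y"
    by (simp add: X_def Y_def algebra_simps)
  then have Vt_lam: "Vt K Pi ns nb t \<epsilon> \<delta> lam = 2 * sqrt (lam\<^sup>2 * X + (1 - lam)\<^sup>2 * Y) + lin"
    unfolding Vt_def Let_def L_def [symmetric] lin_def by simp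
  have Vt_0: "Vt K Pi ns nb t \<epsilon> \<delta> 0 = 2 * sqrt Y + L"
    unfolding Vt_def Let_def L_def [symmetric] Y_def by simp
  have Vt_1: "Vt K Pi ns nb t \<epsilon> \<delta> 1 = 2 * sqrt X + real K / \<epsilon> * L"
    unfolding Vt_def Let_def L_def [symmetric] X_def by simp
  have "(1 - lam) * Vt K Pi ns nb t \<epsilon> \<delta> 0 + lam * Vt K Pi ns nb t \<epsilon> \<delta> 1
        = 2 * (lam * sqrt X + (1 - lam) * sqrt Y) + lin"
    by (simp add: Vt_0 Vt_1 lin_def algebra_simps)
  also have "lam * sqrt X + (1 - lam) * sqrt Y \<le> sqrt 2 * sqrt (lam\<^sup>2 * X + (1 - lam)\<^sup>2 * Y)"
    using add_le_sqrt2_sqrt_sum_squares [of "lam * sqrt X" "(1 - lam) * sqrt Y"]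
      \<open>0 \<le> X\<close> \<open>0 \<le> Y\<close> by (simp add: power_mult_distrib)
  also have "lin \<le> sqrt 2 * lin"
    using \<open>0 \<le> lin\<close> by (rule le_sqrt2_mult)
  finally show ?thesis
    by (simp add: Vt_lam algebra_simps)
qed

lemma Gt_min_endpoints_le:
  assumes "0 \<le> lam" "lam \<le> 1" "0 < t" "0 < ns" "0 < \<alpha>" "0 \<le> \<Delta>" "0 < \<epsilon>"
    and "0 \<le> Lconst nb Pi \<delta>"
  shows "min (Gt K Pi ns nb t \<epsilon> \<delta> 0 \<alpha> \<Delta>) (Gt K Pi ns nb t \<epsilon> \<delta> 1 \<alpha> \<Delta>)
         \<le> sqrt 2 * Gt K Pi ns nb t \<epsilon> \<delta> lam \<alpha> \<Delta>"
proof -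
  define N where "N \<mu> = (1 - \<mu>) * real ns * \<Delta> + 2 * Vt K Pi ns nb t \<epsilon> \<delta> \<mu>" for \<mu>
  define D where "D \<mu> = \<mu> * real t + (1 - \<mu>) * real ns * \<alpha>" for \<mu>
  have Gt_eq: "Gt K Pi ns nb t \<epsilon> \<delta> \<mu> \<alpha> \<Delta> = N \<mu> / D \<mu>" for \<mu>
    by (simp add: Gt_def N_def D_def)
  have "0 < D 0" "0 < D 1"
    using assms by (simp_all add: D_def)
  have D_affine: "(1 - lam) * D 0 + lam * D 1 = D lam"
    by (simp add: D_def algebra_simps)
  then have "0 < D lam"
    using \<open>0 < D 0\<close> \<open>0 < D 1\<close> assms(1,2) by (smt (verit) mult_nonneg_nonneg mult_pos_pos)
  have "(1 - lam) * real ns * \<Delta> \<le> sqrt 2 * ((1 - lam) * real ns * \<Delta>)"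
    using assms by (intro le_sqrt2_mult) simp
  then have N_bound: "(1 - lam) * N 0 + lam * N 1 \<le> sqrt 2 * N lam"
    using Vt_convex_combination_le [OF assms(1,2,7,8), of K ns t]
    by (simp add: N_def algebra_simps)
  have "min (N 0 / D 0) (N 1 / D 1) \<le> ((1 - lam) * N 0 + lam * N 1) / D lam"
    using min_divide_le_convex_combination [of "1 - lam" lam "D 0" "D 1" "N 0" "N 1"]
      assms(1,2) \<open>0 < D 0\<close> \<open>0 < D 1\<close>
    unfolding D_affine by simp
  also have "\<dots> \<le> sqrt 2 * N lam / D lam"
    using N_bound \<open>0 < D lam\<close> by (rule divide_right_mono [OF _ less_imp_le])
  finally show ?thesis
    by (simp add: Gt_eq)
qed

theorem mainTheorem3:
  fixes t ns nb K Pi :: nat and \<epsilon> \<delta> \<alpha> \<Delta> :: real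
  assumes "t > 0" "ns > 0" "nb > 0" "K > 0" "Pi > 0"
    and "0 < \<epsilon>" "\<epsilon> \<le> 1" "0 < \<delta>" "\<delta> < 1" "\<alpha> > 0" "\<Delta> \<ge> 0"
  shows "min (Gt K Pi ns nb t \<epsilon> \<delta> 0 \<alpha> \<Delta>) (Gt K Pi ns nb t \<epsilon> \<delta> 1 \<alpha> \<Delta>)
         \<le> sqrt 2 * (INF lam\<in>{0..1}. Gt K Pi ns nb t \<epsilon> \<delta> lam \<alpha> \<Delta>)"
proof -
  let ?m = "min (Gt K Pi ns nb t \<epsilon> \<delta> 0 \<alpha> \<Delta>) (Gt K Pi ns nb t \<epsilon> \<delta> 1 \<alpha> \<Delta>)"
  have "0 \<le> Lconst nb Pi \<delta>"
    using assms by (intro Lconst_nonneg) auto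
  then have "?m / sqrt 2 \<le> Gt K Pi ns nb t \<epsilon> \<delta> lam \<alpha> \<Delta>" if "lam \<in> {0..1}" for lam
    using Gt_min_endpoints_le [of lam t ns \<alpha> \<Delta> \<epsilon>] that assms
    by (simp add: pos_divide_le_eq mult.commute)
  then have "?m / sqrt 2 \<le> (INF lam\<in>{0..1}. Gt K Pi ns nb t \<epsilon> \<delta> lam \<alpha> \<Delta>)"
    by (intro cINF_greatest) auto
  then show ?thesis
    by (simp add: pos_divide_le_eq mult.commute)
qed

end
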